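(* For every integer $N\ge1$ there exists a function $\mathrm{Col}:\mathbb Z^+\times\mathrm{Chain}(N)\to\mathbb Z^+$ such that for every integer $k\ge0$ with $\log^{(k)}N\ge1$: (1) if $\mathcal A$ is a chain with $\mathrm{lgt}(\mathcal A)\ge 2k$, then for every $s\ge\mathrm{sz}(\mathcal A_{2k})$, $\mathrm{Col}(s,\mathcal A_{2k})\le 2^{6(s+1)}\log^{(k)}N$; (2) if $\mathcal A=\langle A_0,\dots\rangle$ and $\mathcal A'=\langle A'_0,\dots\rangle$ are chains of the same length, with that length at least $2k$, with $\mathrm{sz}(\mathcal A),\mathrm{sz}(\mathcal A')\le s$, $S^1(\mathcal A)\cap S^1(\mathcal A')\ne\emptyset$ and $A_0\ne A'_0$, then $\mathrm{Col}(s,\mathcal A_{2k})\ne\mathrm{Col}(s,\mathcal A'_{2k})$.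
   Context: A chain in $[N]=\{1,\dots,N\}$ is a finite sequence $\mathcal A=\langle A_0,\dots,A_k\rangle$ of subsets of $[N]$ with $|A_0|=1$ and $A_i\subseteq A_{i+1}$ for all $i$; if $A_0=\{w\}$, $w$ is the leader. $\mathrm{Chain}(N)$ is the set of all chains in $[N]$. The length is $\mathrm{lgt}(\mathcal A)=k$ and the size is $\mathrm{sz}(\mathcal A)=|A_k|$. For $i\le\mathrm{lgt}(\mathcal A)$, the prefix is $\mathcal A_i=\langle A_0,\dots,A_i\rangle$. For a chain $\mathcal A=\langle A_0,\dots,A_k\rangle$ and integer $d\ge0$, a chain $\mathcal B=\langle B_0,\dots,B_{k-d}\rangle$ is within distance $d$ of $\mathcal A$ if $A_{i-d}\subseteq B_i\subseteq A_{i+d}$ for all $i\in\{0,\dots,k-d\}$ (sets with negative index are the empty set); $S^d(\mathcal A)$ is the set of all chains within distance $d$ of $\mathcal A$. $\log^{(i)}$ is the $i$-fold iterated base-2 logarithm, $\log^{(0)}N=N$. *)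

theory Defs
  imports Complex_Main
begin

definition Chain :: "nat \<Rightarrow> nat set list set" where
  "Chain N = {A. A \<noteq> [] \<and> card (A ! 0) = 1 \<and> (\<forall>i<length A. A ! i \<subseteq> {1..N})
               \<and> (\<forall>i. Suc i < length A \<longrightarrow> A ! i \<subseteq> A ! Suc i)}"

definition lgt :: "nat set list \<Rightarrow> nat" where
  "lgt A = length A - 1"

definition sz :: "nat set list \<Rightarrow> nat" where
  "sz A = card (last A)"

definition prefix :: "nat set list \<Rightarrow> nat \<Rightarrow> nat set list" where
  "prefix A i = take (Suc i) A"

text \<open>B is within distance d of A (sets with negative index are empty).\<close>
definition within_dist :: "nat \<Rightarrow> nat set list \<Rightarrow> nat set list \<Rightarrow> bool" where
  "within_dist d A B \<longleftrightarrow> lgt B + d = lgt A \<and>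
     (\<forall>i\<le>lgt B. (if d \<le> i then A ! (i - d) else {}) \<subseteq> B ! i \<and> B ! i \<subseteq> A ! (i + d))"

definition S :: "nat \<Rightarrow> nat \<Rightarrow> nat set list \<Rightarrow> nat set list set" where
  "S N d A = {B \<in> Chain N. within_dist d A B}"

definition iter_log :: "nat \<Rightarrow> real \<Rightarrow> real" where
  "iter_log k x = ((\<lambda>y. log 2 y) ^^ k) x"

end

theory Submission
  imports Defs "HOL-Library.FuncSet"
begin

text \<open>
  Proof idea (Linial-style colour reduction along a chain).
  The colour of the prefix A_0..A_2k is computed from its "view" A_0, A_2, ..., A_2k.
  At level 0 the colour is the leader of the chain, a number in [N].  Going from level j
  to level j+1, the new colour of a view is obtained from its old colour u and the set
  of old colours of all "candidate" views M_0..M_j with A_(2i-2) \<subseteq> M_i \<subseteq> A_(2i+2).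
  Two chains whose 1-neighbourhoods meet see each other's views as candidates, and a
  view of a chain of size \<le> s has at most 4^s candidates.  With a (4^s)-cover-free
  family of sets over a ground set of size O(16^s log c), we pick an element of the set
  of u that avoids the sets of all other candidate colours; this keeps neighbouring
  colours apart and shrinks the palette from c to O(16^s log c).
\<close>

section \<open>Cover-free families\<close>

definition cover_free :: "nat \<Rightarrow> nat \<Rightarrow> nat \<Rightarrow> (nat \<Rightarrow> nat set) \<Rightarrow> bool" where
  "cover_free c D m F \<longleftrightarrow> (\<forall>u. F u \<subseteq> {1..m}) \<and>
     (\<forall>u\<in>{1..c}. \<forall>X. X \<subseteq> {1..c} \<longrightarrow> card X \<le> D \<longrightarrow> u \<notin> X \<longrightarrow> \<not> F u \<subseteq> \<Union>(F ` X))"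

lemma avoid_bad_products:
  fixes U :: "'a set" and B :: "'i \<Rightarrow> 'a set" and K :: "'k set"
  assumes fin: "finite I" "finite U" "finite K" and ne: "U \<noteq> {}"
    and sub: "\<forall>p\<in>I. B p \<subseteq> U"
    and dens: "\<forall>p\<in>I. real (card (B p)) \<le> r * real (card U)"
    and small: "real (card I) * r ^ card K < 1"
  shows "\<exists>F \<in> PiE K (\<lambda>_. U). \<forall>p\<in>I. F \<notin> PiE K (\<lambda>_. B p)"
proof (rule ccontr)
  assume "\<not> ?thesis"
  then have cover: "PiE K (\<lambda>_. U) \<subseteq> (\<Union>p\<in>I. PiE K (\<lambda>_. B p))" by blast
  have finB: "finite (B p)" if "p \<in> I" for p using sub that fin(2) finite_subset by blast
  have "card (PiE K (\<lambda>_. U)) \<le> card (\<Union>p\<in>I. PiE K (\<lambda>_. B p))"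
    using cover fin finB by (intro card_mono) (auto intro!: finite_PiE)
  also have "\<dots> \<le> (\<Sum>p\<in>I. card (PiE K (\<lambda>_. B p)))" using fin(1) by (rule card_UN_le)
  finally have "real (card U ^ card K) \<le> real (\<Sum>p\<in>I. card (B p) ^ card K)"
    using fin(3) by (simp add: card_PiE del: of_nat_sum)
  also have "\<dots> \<le> (\<Sum>p\<in>I. (r * real (card U)) ^ card K)"
    unfolding of_nat_sum of_nat_power using dens by (intro sum_mono power_mono) auto
  also have "\<dots> = real (card I) * r ^ card K * real (card U) ^ card K"
    by (simp add: power_mult_distrib)
  also have "\<dots> < real (card U) ^ card K"
    using small ne fin(2) by (simp add: card_gt_0_iff)
  finally show False by simp
qed

text \<open>(1 + 1/D)^a \<le> e < 3 for a \<le> D.\<close>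
lemma succ_power_le_three:
  fixes D a :: nat
  assumes "a \<le> D"
  shows "real (D+1) ^ a \<le> 3 * real D ^ a"
proof (cases "D = 0")
  case True then show ?thesis using assms by simp
next
  case False
  then have Dp: "real D > 0" by simp
  have "real (D+1) ^ a = real D ^ a * (1 + 1 / real D) ^ a"
    using Dp by (simp add: power_mult_distrib[symmetric] field_simps)
  also have "(1 + 1 / real D) ^ a \<le> (1 + 1 / real D) ^ D"
    using assms Dp by (intro power_increasing) auto
  also have "(1 + 1 / real D) ^ D \<le> exp (1 / real D) ^ D"
    using Dp by (intro power_mono) (auto simp: add.commute)
  also have "\<dots> = exp 1" using Dp by (simp add: exp_of_nat_mult[symmetric])
  finally have "real (D+1) ^ a \<le> real D ^ a * exp 1"
    using Dp by (simp add: mult_left_mono)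
  also have "\<dots> \<le> real D ^ a * 3" using exp_le Dp by (intro mult_left_mono) auto
  finally show ?thesis by simp
qed

lemma card_witness_maps:
  fixes c D u :: nat
  assumes u: "u \<in> {1..c}" and X: "X \<subseteq> {1..c}" "u \<notin> X" "card X \<le> D"
  shows "real (card (PiE {1..c} (\<lambda>_. {0..D}))) \<le>
     3 * real (D+1) * real (card {g\<in>PiE {1..c} (\<lambda>_. {0..D}). g u = 0 \<and> (\<forall>y\<in>X. g y \<noteq> 0)})"
proof -
  define T where "T = (\<lambda>i. if i = u then {0} else if i \<in> X then {1..D} else {0..D::nat})"
  define R where "R = {1..c} - insert u X"
  have G: "{g\<in>PiE {1..c} (\<lambda>_. {0..D}). g u = 0 \<and> (\<forall>y\<in>X. g y \<noteq> 0)} = PiE {1..c} T"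
    using u X unfolding T_def by (fastforce simp: PiE_iff split: if_splits)
  have spl: "{1..c} = insert u (X \<union> R)" using u X unfolding R_def by auto
  have fX: "finite X" using X finite_subset by blast
  have dj: "u \<notin> X \<union> R" "X \<inter> R = {}" using X unfolding R_def by auto
  have prod_split: "(\<Prod>i\<in>{1..c}. f i) = f u * ((\<Prod>i\<in>X. f i) * (\<Prod>i\<in>R. f i))"
    for f :: "nat \<Rightarrow> nat"
    unfolding spl using fX dj by (simp add: R_def prod.union_disjoint)
  have cU: "card (PiE {1..c} (\<lambda>_. {0..D})) = (D+1) * ((D+1) ^ card X * (D+1) ^ card R)"
    unfolding card_PiE[OF finite_atLeastAtMost] prod_split by simp
  have "card (PiE {1..c} T) = (\<Prod>i\<in>{1..c}. card (T i))" by (simp add: card_PiE)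
  also have "\<dots> = 1 * ((\<Prod>i\<in>X. D) * (\<Prod>i\<in>R. D+1))"
    unfolding prod_split
    by (rule arg_cong2[where f="(*)"], simp add: T_def,
        rule arg_cong2[where f="(*)"]; rule prod.cong; use dj in \<open>auto simp: T_def\<close>)
  finally have cG: "card (PiE {1..c} T) = D ^ card X * (D+1) ^ card R" by simp
  have "real (D+1) ^ card X \<le> 3 * real D ^ card X" using succ_power_le_three X(3) by blast
  then have "real (D+1) * (real (D+1) ^ card X * real (D+1) ^ card R) \<le>
        real (D+1) * (3 * real D ^ card X * real (D+1) ^ card R)"
    by (intro mult_left_mono mult_right_mono) auto
  then show ?thesis unfolding G cU cG by (simp add: algebra_simps)
qed

lemma bad_maps_density:
  fixes c D u :: nat
  defines "U \<equiv> PiE {1..c} (\<lambda>_. {0..D})"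
  assumes u: "u \<in> {1..c}" and X: "X \<subseteq> {1..c}" "u \<notin> X" "card X \<le> D"
  shows "real (card {g\<in>U. g u = 0 \<longrightarrow> (\<exists>y\<in>X. g y = 0)}) \<le> (1 - 1 / (3 * real (D+1))) * real (card U)"
proof -
  define G where "G = {g\<in>U. g u = 0 \<and> (\<forall>y\<in>X. g y \<noteq> 0)}"
  have finU: "finite U" unfolding U_def by (simp add: finite_PiE)
  have bad: "{g\<in>U. g u = 0 \<longrightarrow> (\<exists>y\<in>X. g y = 0)} = U - G" by (auto simp: G_def)
  have GU: "G \<subseteq> U" by (auto simp: G_def)
  have "real (card U) \<le> 3 * real (D+1) * real (card G)"
    using card_witness_maps[OF u X] unfolding G_def U_def by simp
  then have "real (card U) / (3 * real (D+1)) \<le> real (card G)" by (simp add: field_simps)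
  moreover have "real (card (U - G)) = real (card U) - real (card G)"
    using GU finU by (simp add: card_Diff_subset finite_subset of_nat_diff card_mono)
  ultimately show ?thesis unfolding bad by (simp add: algebra_simps)
qed

lemma card_small_subsets:
  "card {X. X \<subseteq> {1..c::nat} \<and> card X \<le> D} \<le> (c+1)^D"
proof -
  let ?Lists = "{xs. set xs \<subseteq> {0..c} \<and> length xs = D}"
  have "{X. X \<subseteq> {1..c::nat} \<and> card X \<le> D} \<subseteq> (\<lambda>xs. set xs - {0}) ` ?Lists"
  proof
    fix X assume X: "X \<in> {X. X \<subseteq> {1..c::nat} \<and> card X \<le> D}"
    then have fX: "finite X" using finite_subset by auto
    define xs where "xs = sorted_list_of_set X @ replicate (D - card X) 0"
    have "set xs \<subseteq> X \<union> {0}" "X \<subseteq> set xs" "length xs = D"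
      unfolding xs_def using X fX by auto
    then show "X \<in> (\<lambda>xs. set xs - {0}) ` ?Lists"
      using X by (intro image_eqI[of _ _ xs]) (auto simp: subset_iff)
  qed
  then have "card {X. X \<subseteq> {1..c::nat} \<and> card X \<le> D} \<le> card ((\<lambda>xs. set xs - {0}) ` ?Lists)"
    by (intro card_mono finite_imageI finite_lists_length_eq) auto
  also have "\<dots> \<le> card ?Lists" by (rule card_image_le) (simp add: finite_lists_length_eq)
  also have "\<dots> = (c+1)^D" by (simp add: card_lists_length_eq)
  finally show ?thesis .
qed

lemma cover_free_union_bound:
  fixes c D n :: nat
  assumes c1: "c \<ge> 1" and cn: "c \<le> 2^n"
  shows "real (c * (c+1)^D) * (1 - 1 / (3 * real (D+1))) ^ (3*(D+1)^2*(n+2)) < 1"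
proof -
  define q :: real where "q = 1 / (3 * real (D+1))"
  have q01: "0 \<le> q" "q \<le> 1" unfolding q_def by (auto simp: field_simps)
  have "(1 - q) ^ (3*(D+1)^2*(n+2)) \<le> exp (- q) ^ (3*(D+1)^2*(n+2))"
    using q01 exp_ge_add_one_self[of "-q"] by (intro power_mono) auto
  also have "\<dots> = exp (- real ((n+2) * (D+1)))"
    by (simp add: exp_of_nat_mult[symmetric] q_def field_simps power2_eq_square)
  finally have shrink: "(1 - q) ^ (3*(D+1)^2*(n+2)) \<le> exp (- real ((n+2) * (D+1)))" .
  have "c * (c+1)^D \<le> (2*c) ^ (D+1)"
    using c1 power_mono[of "c+1" "2*c" D] by (simp add: mult_le_mono)
  also have "\<dots> \<le> (2 * 2^n) ^ (D+1)" using cn by (intro power_mono) auto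
  also have "\<dots> = 2 ^ ((n+1)*(D+1))" by (simp add: power_mult[symmetric] power_add[symmetric] mult.commute)
  finally have "real (c * (c+1)^D) \<le> real ((2::nat) ^ ((n+1)*(D+1)))" by (simp only: of_nat_le_iff)
  also have "\<dots> = 2 ^ ((n+1)*(D+1))" by simp
  also have "(2::real) ^ ((n+1)*(D+1)) \<le> exp 1 ^ ((n+1)*(D+1))"
    using exp_ge_add_one_self[of 1] by (intro power_mono) auto
  also have "\<dots> = exp (real ((n+1)*(D+1)))"
    using exp_of_nat_mult[of "(n+1)*(D+1)" 1] by (simp only: mult_1_right) (rule sym)
  finally have grow: "real (c * (c+1)^D) \<le> exp (real ((n+1)*(D+1)))" .
  have "real (c * (c+1)^D) * (1 - q) ^ (3*(D+1)^2*(n+2))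
        \<le> exp (real ((n+1)*(D+1))) * exp (- real ((n+2) * (D+1)))"
    using shrink grow q01 by (intro mult_mono) auto
  also have "\<dots> = exp (- real (D+1))" by (simp add: exp_add[symmetric] algebra_simps)
  also have "\<dots> < 1" by simp
  finally show ?thesis unfolding q_def .
qed

text \<open>Existence of D-cover-free families of c sets over a ground set of size
  3(D+1)^2(n+2) whenever c \<le> 2^n: choose m random maps [c] \<rightarrow> {0..D} and let the set of u
  be the coordinates where u is mapped to 0.\<close>
lemma cover_free_exists:
  assumes c1: "c \<ge> 1" and cn: "c \<le> 2^n"
  shows "\<exists>F. cover_free c D (3*(D+1)^2*(n+2)) F"
proof -
  define m where "m = 3*(D+1)^2*(n+2)"
  define U where "U = PiE {1..c} (\<lambda>_. {0..D::nat})"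
  define I where "I = {(u,X). u\<in>{1..c} \<and> X \<subseteq> {1..c} \<and> card X \<le> D \<and> u \<notin> X}"
  define B where "B = (\<lambda>(u,X). {g\<in>U. g u = 0 \<longrightarrow> (\<exists>y\<in>X. g y = 0)})"
  have finI: "finite I"
    by (rule finite_subset[of _ "{1..c} \<times> Pow {1..c}"]) (auto simp: I_def)
  have "card I \<le> card ({1..c} \<times> {X. X \<subseteq> {1..c::nat} \<and> card X \<le> D})"
    by (intro card_mono) (auto simp: I_def)
  also have "\<dots> = c * card {X. X \<subseteq> {1..c::nat} \<and> card X \<le> D}" by (simp add: card_cartesian_product)
  also have "\<dots> \<le> c * (c+1)^D" by (intro mult_left_mono card_small_subsets) auto
  finally have cardI: "real (card I) \<le> real (c * (c+1)^D)" by (simp only: of_nat_le_iff)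
  have dens: "\<forall>p\<in>I. real (card (B p)) \<le> (1 - 1 / (3 * real (D+1))) * real (card U)"
    using bad_maps_density unfolding I_def B_def U_def by auto
  have q0: "0 \<le> (1 - 1 / (3 * real (D+1))) ^ m" by (simp add: field_simps)
  have "real (c * (c+1)^D) * (1 - 1 / (3 * real (D+1))) ^ m < 1"
    using cover_free_union_bound[OF c1 cn, of D] unfolding m_def .
  then have small: "real (card I) * (1 - 1 / (3 * real (D+1))) ^ card {1..m} < 1"
    using le_less_trans[OF mult_right_mono[OF cardI q0]] by simp
  have finU: "finite U" and neU: "U \<noteq> {}" unfolding U_def by (auto simp: finite_PiE PiE_eq_empty_iff)
  have "\<forall>p\<in>I. B p \<subseteq> U" unfolding B_def by auto
  then obtain F0 where F0: "F0 \<in> PiE {1..m} (\<lambda>_. U)" "\<forall>p\<in>I. F0 \<notin> PiE {1..m} (\<lambda>_. B p)"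
    using avoid_bad_products[OF finI finU finite_atLeastAtMost neU _ dens small] by blast
  define F where "F = (\<lambda>u. {x\<in>{1..m}. F0 x u = 0})"
  have "cover_free c D m F"
    unfolding cover_free_def
  proof (intro conjI ballI allI impI)
    fix u X assume uX: "u \<in> {1..c}" "X \<subseteq> {1..c}" "card X \<le> D" "u \<notin> X"
    show "\<not> F u \<subseteq> \<Union> (F ` X)"
    proof
      assume "F u \<subseteq> \<Union> (F ` X)"
      then have "F0 \<in> PiE {1..m} (\<lambda>_. B (u,X))"
        using F0(1) by (auto simp: F_def B_def PiE_iff)
      then show False using F0(2) uX by (auto simp: I_def)
    qed
  qed (auto simp: F_def)
  then show ?thesis unfolding m_def by blast
qed

section \<open>One step of colour reduction\<close>

definition ceil_log2 :: "nat \<Rightarrow> nat" where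
  "ceil_log2 c = nat \<lceil>log 2 (real c)\<rceil>"

definition palette :: "nat \<Rightarrow> nat \<Rightarrow> nat" where
  "palette c D = 3*(D+1)^2*(ceil_log2 c + 2)"

definition cff :: "nat \<Rightarrow> nat \<Rightarrow> nat \<Rightarrow> nat set" where
  "cff c D = (SOME F. cover_free c D (palette c D) F)"

definition reduce :: "nat \<Rightarrow> nat \<Rightarrow> nat \<Rightarrow> nat set \<Rightarrow> nat" where
  "reduce c D u Cs = (if \<exists>x. x \<in> cff c D u \<and> (\<forall>y\<in>Cs-{u}. x \<notin> cff c D y)
     then SOME x. x \<in> cff c D u \<and> (\<forall>y\<in>Cs-{u}. x \<notin> cff c D y) else 1)"

lemma ceil_log2_ge: assumes "c \<ge> 1" shows "c \<le> 2 ^ ceil_log2 c"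
proof -
  have l0: "log 2 (real c) \<ge> 0" using assms by simp
  have "real c = 2 powr log 2 (real c)" using assms by simp
  also have "\<dots> \<le> 2 powr real_of_int \<lceil>log 2 (real c)\<rceil>" by (intro powr_mono) auto
  also have "real_of_int \<lceil>log 2 (real c)\<rceil> = real (ceil_log2 c)" unfolding ceil_log2_def using l0 by simp
  also have "2 powr real (ceil_log2 c) = 2 ^ ceil_log2 c" by (simp add: powr_realpow)
  finally have "real c \<le> real (2 ^ ceil_log2 c)" by simp
  then show ?thesis by (simp only: of_nat_le_iff)
qed

lemma ceil_log2_le: assumes "c \<ge> 1" shows "real (ceil_log2 c) \<le> log 2 (real c) + 1"
  using assms unfolding ceil_log2_def by simp

lemma cff_cover_free: assumes "c \<ge> 1" shows "cover_free c D (palette c D) (cff c D)"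
proof -
  have "\<exists>F. cover_free c D (palette c D) F"
    unfolding palette_def by (intro cover_free_exists ceil_log2_ge assms)
  then show ?thesis unfolding cff_def by (rule someI_ex)
qed

lemma reduce_witness:
  assumes ex: "\<exists>x. x \<in> cff c D u \<and> (\<forall>y\<in>Cs-{u}. x \<notin> cff c D y)"
  shows "reduce c D u Cs \<in> cff c D u \<and> (\<forall>y\<in>Cs-{u}. reduce c D u Cs \<notin> cff c D y)"
  using someI_ex[OF ex] unfolding reduce_def if_P[OF ex] .

lemma palette_pos: "palette c D \<ge> 1"
  unfolding palette_def by (simp add: Suc_le_eq)

lemma reduce_range: assumes "c \<ge> 1" shows "reduce c D u Cs \<in> {1..palette c D}"
proof (cases "\<exists>x. x \<in> cff c D u \<and> (\<forall>y\<in>Cs-{u}. x \<notin> cff c D y)")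
  case True
  then have "reduce c D u Cs \<in> cff c D u" using reduce_witness by blast
  moreover have "cff c D u \<subseteq> {1..palette c D}"
    using cff_cover_free[OF assms, of D] unfolding cover_free_def by blast
  ultimately show ?thesis by blast
next
  case False
  then show ?thesis using palette_pos unfolding reduce_def if_not_P[OF False] by simp
qed

lemma reduce_spec:
  assumes "c \<ge> 1" "u \<in> {1..c}" "Cs \<subseteq> {1..c}" "card Cs \<le> D"
  shows "reduce c D u Cs \<in> cff c D u \<and> (\<forall>y\<in>Cs-{u}. reduce c D u Cs \<notin> cff c D y)"
proof -
  have "finite Cs" using assms(3) finite_subset by blast
  then have "card (Cs - {u}) \<le> D" using assms(4) by (meson card_Diff1_le le_trans)
  then have "\<not> cff c D u \<subseteq> \<Union>(cff c D ` (Cs - {u}))"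
    using cff_cover_free[OF assms(1), of D] assms(2,3) unfolding cover_free_def by blast
  then have "\<exists>x. x \<in> cff c D u \<and> (\<forall>y\<in>Cs-{u}. x \<notin> cff c D y)" by blast
  then show ?thesis by (rule reduce_witness)
qed

lemma reduce_distinct:
  assumes "c \<ge> 1" "u \<in> {1..c}" "Cs \<subseteq> {1..c}" "card Cs \<le> D"
    "u' \<in> {1..c}" "Cs' \<subseteq> {1..c}" "card Cs' \<le> D" "u \<noteq> u'" "u' \<in> Cs"
  shows "reduce c D u Cs \<noteq> reduce c D u' Cs'"
proof -
  have "u' \<in> Cs - {u}" using assms(8,9) by blast
  then show ?thesis using reduce_spec[OF assms(1-4)] reduce_spec[OF assms(1,5-7)] by metis
qed

section \<open>Candidate views\<close>

definition cand :: "nat \<Rightarrow> nat set list \<Rightarrow> nat set list set" where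
  "cand j L = {M. length M = Suc j \<and>
     (\<forall>i\<le>j. (if i = 0 then {} else L!(i-1)) \<subseteq> M!i \<and> M!i \<subseteq> L!(Suc i))}"

text \<open>The positions i at which membership of x in M_i is not forced for a candidate M.\<close>
definition free_steps :: "nat \<Rightarrow> nat set list \<Rightarrow> nat \<Rightarrow> nat set" where
  "free_steps j L x = {i. i \<le> j \<and> x \<in> L!(Suc i) \<and> \<not>(i \<noteq> 0 \<and> x \<in> L!(i-1))}"

text \<open>In a nested list, membership of x is free at no more than two consecutive positions.\<close>
lemma card_free_steps:
  assumes nest: "\<forall>a b. a \<le> b \<longrightarrow> b \<le> Suc j \<longrightarrow> L!a \<subseteq> L!b"
  shows "card (free_steps j L x) \<le> 2"
proof (cases "free_steps j L x = {}")
  case True then show ?thesis by simp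
next
  case False
  have fin: "finite (free_steps j L x)"
    by (rule finite_subset[of _ "{..j}"]) (auto simp: free_steps_def)
  define i0 where "i0 = Min (free_steps j L x)"
  have i0F: "i0 \<in> free_steps j L x" unfolding i0_def using fin False by (rule Min_in)
  have "free_steps j L x \<subseteq> {i0, Suc i0}"
  proof
    fix i assume iF: "i \<in> free_steps j L x"
    have "i0 \<le> i" unfolding i0_def using fin iF by simp
    show "i \<in> {i0, Suc i0}"
    proof (rule ccontr)
      assume "i \<notin> {i0, Suc i0}"
      then have "Suc i0 \<le> i - 1" using \<open>i0 \<le> i\<close> by auto
      moreover have "i - 1 \<le> Suc j" using iF by (auto simp: free_steps_def)
      ultimately have "L!(Suc i0) \<subseteq> L!(i-1)" using nest by blast
      then show False using i0F iF \<open>Suc i0 \<le> i - 1\<close> by (auto simp: free_steps_def)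
    qed
  qed
  then have "card (free_steps j L x) \<le> card {i0, Suc i0}" by (intro card_mono) auto
  then show ?thesis by simp
qed

lemma cand_mem_iff:
  assumes "M \<in> cand j L" "i \<le> j"
  shows "x \<in> M!i \<longleftrightarrow> (i \<in> free_steps j L x \<and> x \<in> M!i) \<or> (i \<noteq> 0 \<and> x \<in> L!(i-1))"
  using assms unfolding cand_def free_steps_def by (auto split: if_splits)

lemma card_cand:
  assumes nest: "\<forall>a b. a \<le> b \<longrightarrow> b \<le> Suc j \<longrightarrow> L!a \<subseteq> L!b" and fin: "finite (L!Suc j)"
  shows "finite (cand j L) \<and> card (cand j L) \<le> 4 ^ card (L ! Suc j)"
proof -
  define X where "X = L ! Suc j"
  define code where "code = (\<lambda>M. restrict (\<lambda>x. {i \<in> free_steps j L x. x \<in> M!i}) X)"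
  have finF: "finite (free_steps j L x)" for x
    by (rule finite_subset[of _ "{..j}"]) (auto simp: free_steps_def)
  have sub: "code ` cand j L \<subseteq> PiE X (\<lambda>x. Pow (free_steps j L x))" unfolding code_def by auto
  have inX: "i \<in> free_steps j L x \<Longrightarrow> x \<in> X" for i x
    using nest[rule_format, of "Suc i" "Suc j"] unfolding X_def free_steps_def by auto
  have inj: "inj_on code (cand j L)"
  proof (rule inj_onI)
    fix M1 M2 assume M: "M1 \<in> cand j L" "M2 \<in> cand j L" and eq: "code M1 = code M2"
    have len: "length M1 = Suc j" "length M2 = Suc j" using M unfolding cand_def by auto
    have "x \<in> M1!i \<longleftrightarrow> x \<in> M2!i" if "i \<le> j" for i x
    proof (cases "x \<in> X")
      case True
      then have "{i \<in> free_steps j L x. x \<in> M1!i} = {i \<in> free_steps j L x. x \<in> M2!i}"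
        using fun_cong[OF eq, of x] by (simp add: code_def)
      then show ?thesis using cand_mem_iff[OF M(1) that] cand_mem_iff[OF M(2) that] by blast
    next
      case False
      then show ?thesis using cand_mem_iff[OF M(1) that] cand_mem_iff[OF M(2) that] inX by blast
    qed
    then show "M1 = M2" using len by (intro nth_equalityI) auto
  qed
  have finP: "finite (PiE X (\<lambda>x. Pow (free_steps j L x)))"
    using fin finF unfolding X_def by (intro finite_PiE) auto
  have "card (cand j L) \<le> card (PiE X (\<lambda>x. Pow (free_steps j L x)))"
    by (rule card_inj_on_le[OF inj sub finP])
  also have "\<dots> = (\<Prod>x\<in>X. 2 ^ card (free_steps j L x))"
    using fin finF unfolding X_def by (simp add: card_PiE card_Pow)
  also have "\<dots> \<le> (\<Prod>x\<in>X. 2 ^ 2)"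
  proof (rule prod_mono)
    fix x show "0 \<le> (2::nat) ^ card (free_steps j L x) \<and> (2::nat) ^ card (free_steps j L x) \<le> 2 ^ 2"
      using power_increasing[OF card_free_steps[OF nest, of x], of "2::nat"] by simp
  qed
  finally have "card (cand j L) \<le> 4 ^ card (L ! Suc j)" unfolding X_def by (simp add: power_mult)
  moreover have "finite (cand j L)" using inj sub finP by (metis finite_imageD finite_subset)
  ultimately show ?thesis by simp
qed

section \<open>The iterated colouring\<close>

primrec palette_size :: "nat \<Rightarrow> nat \<Rightarrow> nat \<Rightarrow> nat" where
  "palette_size N s 0 = N"
| "palette_size N s (Suc j) = palette (palette_size N s j) (4^s)"

primrec colour :: "nat \<Rightarrow> nat \<Rightarrow> nat \<Rightarrow> nat set list \<Rightarrow> nat" where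
  "colour N s 0 L = max 1 (min N (Min (L!0)))"
| "colour N s (Suc j) L = reduce (palette_size N s j) (4^s)
     (colour N s j (take (Suc j) L)) (colour N s j ` cand j L)"

definition view :: "nat \<Rightarrow> nat set list \<Rightarrow> nat set list" where
  "view j A = map (\<lambda>i. A!(2*i)) [0..<Suc j]"

definition Col :: "nat \<Rightarrow> nat \<Rightarrow> nat set list \<Rightarrow> nat" where
  "Col N s P = colour N s (length P div 2) (view (length P div 2) P)"

lemma palette_size_pos: "N \<ge> 1 \<Longrightarrow> palette_size N s j \<ge> 1"
  by (induct j) (auto simp: palette_def Suc_le_eq)

lemma colour_range: "N \<ge> 1 \<Longrightarrow> colour N s j L \<in> {1..palette_size N s j}"
proof (induct j arbitrary: L)
  case (Suc j) then show ?case using reduce_range[OF palette_size_pos] by simp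
qed auto

section \<open>Size of the palettes\<close>

text \<open>The constant 3(4^s+1)^2 of one reduction step, times the additive loss 6s+10, still
  fits into 2^(6s+6).\<close>
lemma linear_le_exponential: "s \<ge> 1 \<Longrightarrow> 12*(6*s+10) \<le> 64*(4::nat)^s"
proof (induct s rule: nat_induct_at_least)
  case (Suc n)
  have "(4::nat)^n \<ge> 1" by simp
  then show ?case using Suc by simp
qed simp

lemma palette_constant_bound:
  assumes "s \<ge> 1" shows "3*(4^s+1)^2*(6*s+10) \<le> (2::nat)^(6*s+6)"
proof -
  have "3*(4^s+1)^2*(6*s+10) \<le> 3*(2*4^s)^2*(6*s+10)"
    by (intro mult_right_mono mult_left_mono power_mono) (auto simp: Suc_le_eq)
  also have "\<dots> = 16^s * (12*(6*s+10))" by (simp add: power2_eq_square power_mult_distrib[symmetric])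
  also have "\<dots> \<le> 16^s * (64*4^s)" using linear_le_exponential[OF assms] by (intro mult_left_mono) auto
  also have "\<dots> = 64 * (16*4)^s" by (simp only: power_mult_distrib)
  also have "\<dots> = 2^(6*s+6)" by (simp add: power_add power_mult)
  finally show ?thesis .
qed

lemma add_le_succ_mult_max:
  fixes a x :: real assumes "a \<ge> 0" "x \<ge> 0" shows "a + x \<le> (a + 1) * max 1 x"
proof (cases "x \<le> 1")
  case False
  then have "a * 1 \<le> a * x" using assms by (intro mult_left_mono) auto
  then show ?thesis using False by (simp add: algebra_simps)
qed simp

lemma palette_step_bound:
  assumes s: "s \<ge> 1" and c: "c \<ge> 1" and l: "l \<ge> 1" and cl: "real c \<le> 2^(6*s+6) * l"
  shows "real (palette c (4^s)) \<le> 2^(6*s+6) * max 1 (log 2 l)"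
proof -
  define K :: real where "K = real (3*(4^s+1)^2)"
  have K0: "K \<ge> 0" unfolding K_def by simp
  have "real (3*(4^s+1)^2*(6*s+10)) \<le> real ((2::nat)^(6*s+6))"
    using palette_constant_bound[OF s] by (simp only: of_nat_le_iff)
  then have K: "K * (6*real s+10) \<le> 2^(6*s+6)" unfolding K_def by simp
  have "log 2 (real c) \<le> log 2 (2^(6*s+6) * l)" using cl c by (subst log_le_cancel_iff) auto
  also have "\<dots> = real (6*s+6) + log 2 l" using l by (simp add: log_mult log_nat_power)
  finally have "real (ceil_log2 c) + 2 \<le> (6*real s + 9) + log 2 l" using ceil_log2_le[OF c] by simp
  also have "\<dots> \<le> (6*real s + 10) * max 1 (log 2 l)"
    using add_le_succ_mult_max[of "6*real s + 9" "log 2 l"] l by (simp add: algebra_simps)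
  finally have "K * (real (ceil_log2 c) + 2) \<le> K * (6*real s + 10) * max 1 (log 2 l)"
    using K0 by (simp add: mult_left_mono mult.assoc)
  also have "\<dots> \<le> 2^(6*s+6) * max 1 (log 2 l)" using K by (intro mult_right_mono) auto
  finally show ?thesis unfolding K_def palette_def by (simp add: algebra_simps)
qed

lemma iter_log_Suc: "iter_log (Suc k) x = log 2 (iter_log k x)"
  by (simp add: iter_log_def)

lemma palette_size_bound:
  assumes N: "N \<ge> 1" and s: "s \<ge> 1"
  shows "real (palette_size N s k) \<le> 2^(6*s+6) * max 1 (iter_log k (real N))"
proof (induct k)
  case 0 then show ?case using N by (simp add: iter_log_def)
next
  case (Suc k)
  define l where "l = max 1 (iter_log k (real N))"
  have "real (palette_size N s (Suc k)) \<le> 2^(6*s+6) * max 1 (log 2 l)"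
    using palette_step_bound[OF s palette_size_pos[OF N]] Suc unfolding l_def by simp
  also have "max 1 (log 2 l) \<le> max 1 (iter_log (Suc k) (real N))"
    unfolding l_def iter_log_Suc by (cases "iter_log k (real N) \<ge> 1") auto
  finally show ?case by simp
qed

lemma chain_len: "A \<in> Chain N \<Longrightarrow> length A = Suc (lgt A)"
  unfolding Chain_def lgt_def by auto

lemma chain_nest:
  assumes A: "A \<in> Chain N" and ab: "a \<le> b" and b: "b < length A"
  shows "A!a \<subseteq> A!b"
  using ab b
proof (induct b)
  case (Suc b)
  show ?case
  proof (cases "a = Suc b")
    case False
    then have "A!a \<subseteq> A!b" using Suc by simp
    also have "A!b \<subseteq> A!Suc b" using A Suc.prems unfolding Chain_def by auto
    finally show ?thesis .
  qed simp
qed simp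

lemma chain_fin: "A \<in> Chain N \<Longrightarrow> i < length A \<Longrightarrow> finite (A!i)"
  unfolding Chain_def by (auto intro: finite_subset)

lemma chain_head: assumes "A \<in> Chain N" obtains w where "A!0 = {w}" "w \<in> {1..N}"
proof -
  have c: "card (A!0) = 1" and s: "A!0 \<subseteq> {1..N}" using assms unfolding Chain_def by auto
  from c obtain w where "A!0 = {w}" by (rule card_1_singletonE)
  then show ?thesis using s that by auto
qed

lemma card_le_sz:
  assumes A: "A \<in> Chain N" and i: "i < length A"
  shows "card (A!i) \<le> sz A"
proof -
  have "last A = A!(length A - 1)" using A by (simp add: last_conv_nth Chain_def)
  moreover have "A!i \<subseteq> A!(length A - 1)" using chain_nest[OF A] i by auto
  moreover have "finite (A!(length A - 1))" using chain_fin[OF A] i by simp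
  ultimately show ?thesis unfolding sz_def by (simp add: card_mono)
qed

text \<open>If A and A' are both within distance 1 of B then A'_m \<subseteq> B_(m+1) \<subseteq> A_(m+2).\<close>
lemma common_neighbour_nested:
  assumes "within_dist 1 A B" "within_dist 1 A' B" "m + 2 \<le> lgt A"
  shows "A'!m \<subseteq> A!(m+2)"
proof -
  have m: "m + 1 \<le> lgt B" using assms unfolding within_dist_def by simp
  have "A'!m \<subseteq> B!(m+1)" using assms(2) m unfolding within_dist_def by (auto dest!: spec[of _ "m+1"])
  also have "B!(m+1) \<subseteq> A!(m+1+1)" using assms(1) m unfolding within_dist_def by (auto dest!: spec[of _ "m+1"])
  finally show ?thesis by (simp add: numeral_2_eq_2)
qed

lemma view_nth: "i \<le> j \<Longrightarrow> view j A ! i = A!(2*i)"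
  unfolding view_def by (simp del: upt_Suc)

lemma view_len: "length (view j A) = Suc j"
  unfolding view_def by simp

lemma view_take: "take (Suc j) (view (Suc j) A) = view j A"
  by (rule nth_equalityI) (auto simp: view_len view_nth)

lemma view_in_cand:
  assumes B: "within_dist 1 A B" "within_dist 1 A' B"
    and l: "lgt A = lgt A'" "2*Suc j \<le> lgt A"
  shows "view j A' \<in> cand j (view (Suc j) A)"
proof -
  have "(if i = 0 then {} else view (Suc j) A ! (i-1)) \<subseteq> view j A' ! i \<and>
        view j A' ! i \<subseteq> view (Suc j) A ! Suc i" if i: "i \<le> j" for i
  proof
    have "A'!(2*i) \<subseteq> A!(2*i+2)" using common_neighbour_nested[OF B] l i by simp
    then show "view j A' ! i \<subseteq> view (Suc j) A ! Suc i" using i by (simp add: view_nth)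
    show "(if i = 0 then {} else view (Suc j) A ! (i-1)) \<subseteq> view j A' ! i"
    proof (cases "i = 0")
      case False
      have "A!(2*(i-1)) \<subseteq> A'!(2*(i-1)+2)" using common_neighbour_nested[OF B(2,1)] l i False by simp
      moreover have "2*(i-1)+2 = 2*i" using False by simp
      ultimately show ?thesis using False i by (simp add: view_nth)
    qed simp
  qed
  then show ?thesis unfolding cand_def by (simp add: view_len)
qed

lemma candidate_colours_bounded:
  assumes N: "N \<ge> 1" and A: "A \<in> Chain N" and l: "2*Suc j \<le> lgt A" and sz: "sz A \<le> s"
  shows "colour N s j ` cand j (view (Suc j) A) \<subseteq> {1..palette_size N s j} \<and>
         card (colour N s j ` cand j (view (Suc j) A)) \<le> 4^s"
proof -
  let ?L = "view (Suc j) A"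
  have len: "length A = Suc (lgt A)" by (rule chain_len[OF A])
  have nest: "\<forall>a b. a \<le> b \<longrightarrow> b \<le> Suc j \<longrightarrow> ?L!a \<subseteq> ?L!b"
  proof (intro allI impI)
    fix a b :: nat assume "a \<le> b" "b \<le> Suc j"
    then show "?L!a \<subseteq> ?L!b" using chain_nest[OF A, of "2*a" "2*b"] l len by (simp add: view_nth)
  qed
  have last: "?L ! Suc j = A!(2*Suc j)" by (simp add: view_nth)
  have fin: "finite (?L ! Suc j)" unfolding last using chain_fin[OF A] l len by simp
  have cardL: "card (?L ! Suc j) \<le> s" unfolding last using card_le_sz[OF A, of "2*Suc j"] l len sz by simp
  have "card (colour N s j ` cand j ?L) \<le> card (cand j ?L)"
    using card_cand[OF nest fin] by (simp add: card_image_le)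
  also have "\<dots> \<le> 4 ^ card (?L ! Suc j)" using card_cand[OF nest fin] by simp
  also have "\<dots> \<le> 4 ^ s" using cardL by (intro power_increasing) auto
  finally show ?thesis using colour_range[OF N] by auto
qed

lemma colour_separates:
  assumes N: "N \<ge> 1" and A: "A \<in> Chain N" and A': "A' \<in> Chain N" and l: "lgt A = lgt A'"
    and sA: "sz A \<le> s" and sA': "sz A' \<le> s"
    and B: "within_dist 1 A B" "within_dist 1 A' B" and leaders: "A!0 \<noteq> A'!0"
  shows "2*j \<le> lgt A \<Longrightarrow> colour N s j (view j A) \<noteq> colour N s j (view j A')"
proof (induction j)
  case 0
  obtain w where "A!0 = {w}" "w \<in> {1..N}" using chain_head[OF A] .
  moreover obtain w' where "A'!0 = {w'}" "w' \<in> {1..N}" using chain_head[OF A'] .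
  ultimately show ?case using leaders by (simp add: view_nth)
next
  case (Suc j)
  have old: "colour N s j (view j A) \<noteq> colour N s j (view j A')" using Suc by simp
  have sees: "colour N s j (view j A') \<in> colour N s j ` cand j (view (Suc j) A)"
    using view_in_cand[OF B l Suc.prems] by blast
  have cands: "colour N s j ` cand j (view (Suc j) A) \<subseteq> {1..palette_size N s j}"
    "card (colour N s j ` cand j (view (Suc j) A)) \<le> 4^s"
    using candidate_colours_bounded[OF N A Suc.prems sA] by auto
  have cands': "colour N s j ` cand j (view (Suc j) A') \<subseteq> {1..palette_size N s j}"
    "card (colour N s j ` cand j (view (Suc j) A')) \<le> 4^s"
    using candidate_colours_bounded[OF N A' _ sA'] l Suc.prems by auto
  show ?case
    unfolding colour.simps view_take
    by (rule reduce_distinct[OF palette_size_pos[OF N] colour_range[OF N] cands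
          colour_range[OF N] cands' old sees])
qed

lemma prefix_facts:
  assumes A: "A \<in> Chain N" and l: "2*k \<le> lgt A"
  shows "length (prefix A (2*k)) div 2 = k" "view k (prefix A (2*k)) = view k A"
    "sz (prefix A (2*k)) = card (A!(2*k))"
proof -
  have lp: "length (prefix A (2*k)) = Suc (2*k)"
    unfolding prefix_def using chain_len[OF A] l by simp
  then show "length (prefix A (2*k)) div 2 = k" by simp
  show "view k (prefix A (2*k)) = view k A"
    by (rule nth_equalityI) (auto simp: view_len view_nth prefix_def)
  have "prefix A (2*k) \<noteq> []" using lp by auto
  then have "last (prefix A (2*k)) = prefix A (2*k) ! (2*k)" by (simp add: last_conv_nth lp)
  then show "sz (prefix A (2*k)) = card (A!(2*k))" unfolding sz_def prefix_def by simp
qed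

lemma Col_pos: "N \<ge> 1 \<Longrightarrow> Col N s P \<ge> 1"
  unfolding Col_def using colour_range by simp

lemma Col_bound:
  assumes N: "N \<ge> 1" and lk: "iter_log k (real N) \<ge> 1" and A: "A \<in> Chain N"
    and l: "2*k \<le> lgt A" and s: "sz (prefix A (2*k)) \<le> s"
  shows "real (Col N s (prefix A (2*k))) \<le> 2 ^ (6 * (s + 1)) * iter_log k (real N)"
proof -
  obtain w where w: "A!0 = {w}" using chain_head[OF A] .
  have "card (A!0) \<le> card (A!(2*k))"
    using chain_nest[OF A, of 0 "2*k"] chain_fin[OF A, of "2*k"] chain_len[OF A] l
    by (simp add: card_mono)
  then have s1: "s \<ge> 1" using s prefix_facts(3)[OF A l] w by simp
  have "real (Col N s (prefix A (2*k))) \<le> real (palette_size N s k)"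
    unfolding Col_def prefix_facts[OF A l] using colour_range[OF N] by simp
  also have "\<dots> \<le> 2^(6*s+6) * max 1 (iter_log k (real N))" by (rule palette_size_bound[OF N s1])
  also have "\<dots> = 2 ^ (6 * (s + 1)) * iter_log k (real N)" using lk by (simp add: max_def)
  finally show ?thesis .
qed

lemma Col_separates:
  assumes N: "N \<ge> 1" and A: "A \<in> Chain N" and A': "A' \<in> Chain N"
    and l: "lgt A = lgt A'" "2*k \<le> lgt A" and s: "sz A \<le> s" "sz A' \<le> s"
    and meet: "S N 1 A \<inter> S N 1 A' \<noteq> {}" and leaders: "A!0 \<noteq> A'!0"
  shows "Col N s (prefix A (2*k)) \<noteq> Col N s (prefix A' (2*k))"
proof -
  obtain B where B: "within_dist 1 A B" "within_dist 1 A' B" using meet unfolding S_def by auto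
  have "colour N s k (view k A) \<noteq> colour N s k (view k A')"
    by (rule colour_separates[OF N A A' l(1) s B leaders l(2)])
  moreover have l': "2*k \<le> lgt A'" using l by simp
  ultimately show ?thesis
    unfolding Col_def prefix_facts[OF A l(2)] prefix_facts[OF A' l'] by simp
qed

theorem mainTheorem11:
  fixes N :: nat
  assumes "N \<ge> 1"
  shows "\<exists>Col :: nat \<Rightarrow> nat set list \<Rightarrow> nat.
    (\<forall>s\<ge>1. \<forall>A\<in>Chain N. Col s A \<ge> 1) \<and>
    (\<forall>k::nat. iter_log k (real N) \<ge> 1 \<longrightarrow>
      (\<forall>A\<in>Chain N. lgt A \<ge> 2 * k \<longrightarrow>
         (\<forall>s\<ge>sz (prefix A (2 * k)).
            real (Col s (prefix A (2 * k))) \<le> 2 ^ (6 * (s + 1)) * iter_log k (real N))) \<and>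
      (\<forall>A\<in>Chain N. \<forall>A'\<in>Chain N. \<forall>s.
         lgt A = lgt A' \<and> lgt A \<ge> 2 * k \<and> sz A \<le> s \<and> sz A' \<le> s \<and>
         S N 1 A \<inter> S N 1 A' \<noteq> {} \<and> A ! 0 \<noteq> A' ! 0 \<longrightarrow>
         Col s (prefix A (2 * k)) \<noteq> Col s (prefix A' (2 * k))))"
  using Col_pos[OF assms] Col_bound[OF assms] Col_separates[OF assms]
  by (intro exI[of _ "Col N"]) blast

end
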